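(* Let $\mathcal{C}\subseteq\mathbb{R}[x_1,\dots,x_n]$ be a convex cone with apex $0$ which is closed in the LF-topology of $\mathbb{R}[x_1,\dots,x_n]$. Then $\mathfrak{D}_\mathcal{C}\subseteq\mathfrak{d}_\mathcal{C}$.
   Context: $\mathfrak{d}$ is the set of linear maps $\sum_\alpha q_\alpha\partial^\alpha$ on $\mathbb{R}[x_1,\dots,x_n]$ with $q_\alpha$ a polynomial of degree $\le|\alpha|$ for all $\alpha$; $\mathfrak{D}$ is the set of those elements of $\mathfrak{d}$ with trivial kernel. For $A\in\mathfrak{d}$, $e^{tA}=\sum_kt^kA^k/k!$ is well defined since $A$ preserves each space of polynomials of degree $\le d$. $\mathfrak{D}_\mathcal{C}=\{T\in\mathfrak{D}: T\mathcal{C}\subseteq\mathcal{C}\}$ and $\mathfrak{d}_\mathcal{C}=\{A\in\mathfrak{d}: e^{tA}\in\mathfrak{D}_\mathcal{C}\ \forall t\ge0\}$. The LF-topology is the inductive limit topology of the finite-dimensional subspaces of polynomials of degree $\le d$. *)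

theory Defs
  imports "HOL-Analysis.Analysis" "HOL-Library.Poly_Mapping"
begin

type_synonym 'n rpoly = "('n \<Rightarrow>\<^sub>0 nat) \<Rightarrow>\<^sub>0 real"

definition mdeg :: "('n \<Rightarrow>\<^sub>0 nat) \<Rightarrow> nat" where
  "mdeg \<alpha> = (\<Sum>i\<in>Poly_Mapping.keys \<alpha>. Poly_Mapping.lookup \<alpha> i)"

definition deg_le :: "nat \<Rightarrow> 'n rpoly \<Rightarrow> bool" where
  "deg_le d p \<longleftrightarrow> (\<forall>\<alpha>\<in>Poly_Mapping.keys p. mdeg \<alpha> \<le> d)"

definition pdeg :: "'n rpoly \<Rightarrow> nat" where
  "pdeg p = Max (insert 0 (mdeg ` Poly_Mapping.keys p))"

definition smult_rp :: "real \<Rightarrow> 'n rpoly \<Rightarrow> 'n rpoly" where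
  "smult_rp c p = Poly_Mapping.map (\<lambda>x. c * x) p"

definition pder :: "('n \<Rightarrow>\<^sub>0 nat) \<Rightarrow> 'n rpoly \<Rightarrow> 'n rpoly" where
  "pder \<alpha> p = (\<Sum>\<beta>\<in>Poly_Mapping.keys p.
      if (\<forall>i. Poly_Mapping.lookup \<alpha> i \<le> Poly_Mapping.lookup \<beta> i)
      then Poly_Mapping.single (\<beta> - \<alpha>)
             (Poly_Mapping.lookup p \<beta> * (\<Prod>i\<in>Poly_Mapping.keys \<beta>. fact (Poly_Mapping.lookup \<beta> i) / fact (Poly_Mapping.lookup \<beta> i - Poly_Mapping.lookup \<alpha> i)))
      else 0)"

text \<open>The operator sum_alpha q_alpha \<partial>^alpha (terms with |alpha| > deg p vanish on p).\<close>
definition diffop :: "(('n \<Rightarrow>\<^sub>0 nat) \<Rightarrow> 'n rpoly) \<Rightarrow> 'n rpoly \<Rightarrow> 'n rpoly" where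
  "diffop q p = (\<Sum>\<alpha>\<in>{\<alpha>. mdeg \<alpha> \<le> pdeg p}. q \<alpha> * pder \<alpha> p)"

definition dops :: "('n::finite rpoly \<Rightarrow> 'n rpoly) set" where
  "dops = {A. \<exists>q. (\<forall>\<alpha>. deg_le (mdeg \<alpha>) (q \<alpha>)) \<and> A = diffop q}"

definition Dops :: "('n::finite rpoly \<Rightarrow> 'n rpoly) set" where
  "Dops = {T \<in> dops. \<forall>p. T p = 0 \<longrightarrow> p = 0}"

text \<open>e^{tA} = sum_k t^k A^k / k!, defined coefficientwise (the series converges in the
  finite-dimensional space of polynomials of degree \<le> deg p, which A preserves).\<close>
definition expop :: "real \<Rightarrow> ('n rpoly \<Rightarrow> 'n rpoly) \<Rightarrow> 'n rpoly \<Rightarrow> 'n rpoly" where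
  "expop t A p = Abs_poly_mapping (\<lambda>\<beta>. suminf (\<lambda>k. t ^ k / fact k * Poly_Mapping.lookup ((A ^^ k) p) \<beta>))"

definition convex_cone_rp :: "'n rpoly set \<Rightarrow> bool" where
  "convex_cone_rp C \<longleftrightarrow> 0 \<in> C \<and> (\<forall>p\<in>C. \<forall>q\<in>C. p + q \<in> C)
     \<and> (\<forall>c\<ge>0. \<forall>p\<in>C. smult_rp c p \<in> C)"

text \<open>Closed in the LF-topology: the trace on each space of polynomials of degree \<le> d is
  closed (in the Euclidean topology of that finite-dimensional space; we use the product
  topology on coefficient functions, which induces it there).\<close>
definition LF_closed :: "'n::finite rpoly set \<Rightarrow> bool" where
  "LF_closed C \<longleftrightarrow> (\<forall>d. closed (Poly_Mapping.lookup ` {p \<in> C. deg_le d p}))"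

definition Dops_C :: "'n::finite rpoly set \<Rightarrow> ('n rpoly \<Rightarrow> 'n rpoly) set" where
  "Dops_C C = {T \<in> Dops. \<forall>p\<in>C. T p \<in> C}"

definition dops_C :: "'n::finite rpoly set \<Rightarrow> ('n rpoly \<Rightarrow> 'n rpoly) set" where
  "dops_C C = {A \<in> dops. \<forall>t\<ge>0. expop t A \<in> Dops_C C}"

end

theory Submission
  imports Defs "HOL-Analysis.Finite_Function_Topology"
begin

text \<open>An operator lies in \<open>\<dd>\<close> exactly when it is linear and maps polynomials of degree
  \<open>\<le> d\<close> to polynomials of degree \<open>\<le> d\<close>; the coefficients \<open>q\<^sub>\<alpha>\<close> are found by solving a
  triangular system. For such an \<open>A\<close>, the polynomials of degree \<open>\<le> d\<close> form a finite-dimensional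
  \<open>A\<close>-invariant space on which \<open>A\<close> is bounded, so the series of \<open>exp(tA)\<close> converges absolutely
  in every coefficient. Hence \<open>exp(tA)\<close> is again linear and degree-preserving, i.e. lies in
  \<open>\<dd>\<close>, and the semigroup law \<open>exp(sA) exp(tA) = exp((s+t)A)\<close> (a Cauchy product) makes it
  injective. If \<open>T\<close> maps \<open>\<C>\<close> into itself, the partial sums of \<open>exp(tT) p\<close> are nonnegative
  combinations of the \<open>T\<^sup>k p\<close>, all of degree \<open>\<le> deg p\<close>; they lie in \<open>\<C>\<close>, and so does their
  limit, because \<open>\<C>\<close> is closed among polynomials of degree \<open>\<le> deg p\<close>.\<close>

section \<open>Multi-indices\<close>

abbreviation mdeg_atMost :: "nat \<Rightarrow> ('n \<Rightarrow>\<^sub>0 nat) set" where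
  "mdeg_atMost d \<equiv> {\<alpha>. mdeg \<alpha> \<le> d}"

lemma mdeg_eq_sum_UNIV: "mdeg (\<alpha>::'n::finite \<Rightarrow>\<^sub>0 nat) = (\<Sum>i\<in>UNIV. Poly_Mapping.lookup \<alpha> i)"
  unfolding mdeg_def by (rule sum.mono_neutral_left) (auto simp: in_keys_iff)

lemma mdeg_add: "mdeg ((\<alpha>::'n::finite \<Rightarrow>\<^sub>0 nat) + \<beta>) = mdeg \<alpha> + mdeg \<beta>"
  by (simp add: mdeg_eq_sum_UNIV lookup_add sum.distrib)

lemma mdeg_eq_0_iff: "mdeg (\<alpha>::'n::finite \<Rightarrow>\<^sub>0 nat) = 0 \<longleftrightarrow> \<alpha> = 0"
  by (auto simp: mdeg_eq_sum_UNIV poly_mapping_eq_iff fun_eq_iff)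

lemma lookup_le_mdeg: "Poly_Mapping.lookup (\<alpha>::'n::finite \<Rightarrow>\<^sub>0 nat) i \<le> mdeg \<alpha>"
  unfolding mdeg_eq_sum_UNIV by (rule member_le_sum) auto

lemma finite_mdeg_atMost: "finite (mdeg_atMost d :: ('n::finite \<Rightarrow>\<^sub>0 nat) set)"
proof -
  have "mdeg_atMost d \<subseteq> Abs_poly_mapping ` PiE (UNIV::'n set) (\<lambda>_. {..d})"
  proof
    fix \<alpha> :: "'n \<Rightarrow>\<^sub>0 nat" assume "\<alpha> \<in> mdeg_atMost d"
    then have "Poly_Mapping.lookup \<alpha> \<in> PiE UNIV (\<lambda>_. {..d})"
      using lookup_le_mdeg[of \<alpha>] by (auto intro: order_trans)
    then show "\<alpha> \<in> Abs_poly_mapping ` PiE UNIV (\<lambda>_. {..d})"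
      by (metis image_eqI lookup_inverse)
  qed
  then show ?thesis
    by (rule finite_subset) (intro finite_imageI finite_PiE; simp)
qed

definition mdvd :: "('n \<Rightarrow>\<^sub>0 nat) \<Rightarrow> ('n \<Rightarrow>\<^sub>0 nat) \<Rightarrow> bool" where
  "mdvd \<alpha> \<beta> \<longleftrightarrow> (\<forall>i. Poly_Mapping.lookup \<alpha> i \<le> Poly_Mapping.lookup \<beta> i)"

lemma mdvd_refl [simp]: "mdvd \<alpha> \<alpha>"
  by (simp add: mdvd_def)

lemma mdeg_mono: "mdvd \<alpha> \<beta> \<Longrightarrow> mdeg (\<alpha>::'n::finite \<Rightarrow>\<^sub>0 nat) \<le> mdeg \<beta>"
  unfolding mdvd_def mdeg_eq_sum_UNIV by (rule sum_mono) auto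

lemma mdvd_diff_add: "mdvd \<alpha> \<beta> \<Longrightarrow> (\<beta> - \<alpha>) + \<alpha> = \<beta>"
  unfolding mdvd_def by (auto simp: poly_mapping_eq_iff fun_eq_iff lookup_add lookup_minus)

lemma mdeg_diff: "mdvd \<alpha> \<beta> \<Longrightarrow> mdeg (\<beta> - \<alpha>) = mdeg (\<beta>::'n::finite \<Rightarrow>\<^sub>0 nat) - mdeg \<alpha>"
  by (metis mdvd_diff_add mdeg_add add_diff_cancel_right')

lemma mdvd_mdeg_eq_imp_eq: "mdvd \<alpha> \<beta> \<Longrightarrow> mdeg \<alpha> = mdeg (\<beta>::'n::finite \<Rightarrow>\<^sub>0 nat) \<Longrightarrow> \<alpha> = \<beta>"
  by (metis mdvd_diff_add mdeg_diff mdeg_eq_0_iff diff_self_eq_0 add_0)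

section \<open>Polynomials\<close>

abbreviation xpow :: "('n \<Rightarrow>\<^sub>0 nat) \<Rightarrow> 'n rpoly" where
  "xpow \<alpha> \<equiv> Poly_Mapping.single \<alpha> 1"

lemma lookup_scaleR_poly_mapping [simp]:
  "Poly_Mapping.lookup (c *\<^sub>R p) k = c * Poly_Mapping.lookup (p :: 'a \<Rightarrow>\<^sub>0 real) k"
proof -
  have "finite {i. c * Poly_Mapping.lookup p i \<noteq> 0}"
    by (rule finite_subset[OF _ finite_keys]) (auto simp: in_keys_iff)
  then show ?thesis by (simp add: scaleR_poly_mapping_def)
qed

lemma smult_rp_eq_scaleR: "smult_rp c p = c *\<^sub>R p"
  by (rule poly_mapping_eqI) (simp add: smult_rp_def Poly_Mapping.map.rep_eq when_def)

lemma scaleR_eq_const_mult: "c *\<^sub>R p = Poly_Mapping.single 0 c * (p :: 'n rpoly)"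
  by (metis smult_rp_eq_scaleR smult_rp_def mult_map_scale_conv_mult)

lemma scaleR_single: "c *\<^sub>R Poly_Mapping.single k a = Poly_Mapping.single k (c * a)"
  by (rule poly_mapping_eqI) (simp add: lookup_single when_def)

lemma rpoly_eq_sum_xpow:
  assumes "finite S" "Poly_Mapping.keys p \<subseteq> S"
  shows "p = (\<Sum>\<beta>\<in>S. Poly_Mapping.lookup p \<beta> *\<^sub>R xpow \<beta>)"
proof (rule poly_mapping_eqI)
  fix k
  have "(\<Sum>\<beta>\<in>S. Poly_Mapping.lookup p \<beta> * Poly_Mapping.lookup (xpow \<beta>) k)
      = (\<Sum>\<beta>\<in>S. if \<beta> = k then Poly_Mapping.lookup p k else 0)"
    by (rule sum.cong) (auto simp: lookup_single when_def)
  also have "\<dots> = Poly_Mapping.lookup p k"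
    using assms by (auto simp: in_keys_iff)
  finally show "Poly_Mapping.lookup p k
      = Poly_Mapping.lookup (\<Sum>\<beta>\<in>S. Poly_Mapping.lookup p \<beta> *\<^sub>R xpow \<beta>) k"
    by (simp add: lookup_sum)
qed

lemma linear_eq_sum_xpow:
  assumes "linear L" "finite S" "Poly_Mapping.keys p \<subseteq> S"
  shows "L p = (\<Sum>\<beta>\<in>S. Poly_Mapping.lookup p \<beta> *\<^sub>R L (xpow \<beta>))"
  by (subst rpoly_eq_sum_xpow[OF assms(2,3)]) (simp add: linear_sum[OF assms(1)] linear_scale[OF assms(1)])

lemma linear_eqI_xpow:
  assumes "linear L" "linear K" "\<And>\<beta>. L (xpow \<beta>) = K (xpow \<beta>)"
  shows "L = K"
proof
  fix p
  show "L p = K p"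
    using linear_eq_sum_xpow[OF assms(1) finite_keys subset_refl, of p]
      linear_eq_sum_xpow[OF assms(2) finite_keys subset_refl, of p] assms(3)
    by simp
qed

lemma linear_funpow: "linear (L :: 'a::real_vector \<Rightarrow> 'a) \<Longrightarrow> linear (L ^^ k)"
  by (induction k) (simp_all add: linear_id linear_compose)

lemma deg_le_iff_keys: "deg_le d p \<longleftrightarrow> Poly_Mapping.keys p \<subseteq> mdeg_atMost d"
  by (auto simp: deg_le_def)

lemma lookup_eq_0_if_not_deg_le:
  "deg_le d p \<Longrightarrow> \<not> mdeg \<beta> \<le> d \<Longrightarrow> Poly_Mapping.lookup p \<beta> = 0"
  by (auto simp: deg_le_def in_keys_iff)

lemma deg_le_0 [simp]: "deg_le d 0"
  by (simp add: deg_le_def)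

lemma deg_le_add: "deg_le d p \<Longrightarrow> deg_le d r \<Longrightarrow> deg_le d (p + r)"
  using keys_add[of p r] by (auto simp: deg_le_def)

lemma deg_le_diff: "deg_le d p \<Longrightarrow> deg_le d r \<Longrightarrow> deg_le d (p - r)"
  using keys_diff[of p r] by (auto simp: deg_le_def)

lemma deg_le_sum: "(\<And>x. x \<in> S \<Longrightarrow> deg_le d (f x)) \<Longrightarrow> deg_le d (sum f S)"
  by (induction S rule: infinite_finite_induct) (auto intro: deg_le_add)

lemma deg_le_mono: "deg_le d p \<Longrightarrow> d \<le> e \<Longrightarrow> deg_le e p"
  by (auto simp: deg_le_def)

lemma deg_le_scaleR: "deg_le d p \<Longrightarrow> deg_le d (c *\<^sub>R p)"
  by (auto simp: deg_le_def in_keys_iff)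

lemma deg_le_single: "deg_le (mdeg \<beta>) (Poly_Mapping.single \<beta> c)"
  by (simp add: deg_le_def)

lemma deg_le_mult:
  assumes "deg_le a p" "deg_le b (r::'n::finite rpoly)"
  shows "deg_le (a + b) (p * r)"
  unfolding deg_le_def
proof
  fix \<gamma> assume "\<gamma> \<in> Poly_Mapping.keys (p * r)"
  then obtain x y where "\<gamma> = x + y" "x \<in> Poly_Mapping.keys p" "y \<in> Poly_Mapping.keys r"
    using keys_mult[of p r] by blast
  with assms show "mdeg \<gamma> \<le> a + b"
    by (auto simp: deg_le_def mdeg_add intro: add_mono)
qed

lemma deg_le_pdeg: "deg_le (pdeg p) p"
  unfolding deg_le_def pdeg_def by (auto intro: Max_ge)

lemma pdeg_le: "deg_le d p \<Longrightarrow> pdeg p \<le> d"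
  unfolding deg_le_def pdeg_def by (subst Max_le_iff) auto

definition preserves_deg_le :: "('n rpoly \<Rightarrow> 'n rpoly) \<Rightarrow> bool" where
  "preserves_deg_le L \<longleftrightarrow> (\<forall>d p. deg_le d p \<longrightarrow> deg_le d (L p))"

lemma deg_le_funpow: "preserves_deg_le L \<Longrightarrow> deg_le d p \<Longrightarrow> deg_le d ((L ^^ k) p)"
  by (induction k) (auto simp: preserves_deg_le_def)

lemma lookup_linear:
  assumes "linear L" "deg_le d (p::'n::finite rpoly)"
  shows "Poly_Mapping.lookup (L p) \<beta>
    = (\<Sum>\<gamma>\<in>mdeg_atMost d. Poly_Mapping.lookup p \<gamma> * Poly_Mapping.lookup (L (xpow \<gamma>)) \<beta>)"
  using assms by (subst linear_eq_sum_xpow[OF assms(1) finite_mdeg_atMost])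
    (auto simp: deg_le_iff_keys lookup_sum)

section \<open>Differential operators\<close>

definition pder_factor :: "('n \<Rightarrow>\<^sub>0 nat) \<Rightarrow> ('n \<Rightarrow>\<^sub>0 nat) \<Rightarrow> real" where
  "pder_factor \<alpha> \<beta> = (\<Prod>i\<in>Poly_Mapping.keys \<beta>.
      fact (Poly_Mapping.lookup \<beta> i) / fact (Poly_Mapping.lookup \<beta> i - Poly_Mapping.lookup \<alpha> i))"

definition pder_mon :: "('n \<Rightarrow>\<^sub>0 nat) \<Rightarrow> ('n \<Rightarrow>\<^sub>0 nat) \<Rightarrow> real \<Rightarrow> 'n rpoly" where
  "pder_mon \<alpha> \<beta> c = (if mdvd \<alpha> \<beta> then Poly_Mapping.single (\<beta> - \<alpha>) (c * pder_factor \<alpha> \<beta>) else 0)"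

lemma pder_mon_add: "pder_mon \<alpha> \<beta> (a + b) = pder_mon \<alpha> \<beta> a + pder_mon \<alpha> \<beta> b"
  by (simp add: pder_mon_def single_add distrib_right)

lemma pder_mon_scale: "pder_mon \<alpha> \<beta> (c * a) = c *\<^sub>R pder_mon \<alpha> \<beta> a"
  by (simp add: pder_mon_def scaleR_single mult.assoc)

lemma pder_eq_sum:
  assumes "finite S" "Poly_Mapping.keys p \<subseteq> S"
  shows "pder \<alpha> p = (\<Sum>\<beta>\<in>S. pder_mon \<alpha> \<beta> (Poly_Mapping.lookup p \<beta>))"
  unfolding pder_def pder_mon_def pder_factor_def mdvd_def using assms
  by (intro sum.mono_neutral_left) (auto simp: in_keys_iff)

lemma pder_xpow: "pder \<alpha> (xpow \<beta>) = pder_mon \<alpha> \<beta> 1"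
  by (simp add: pder_eq_sum[of "{\<beta>}"])

lemma pder_xpow_self: "pder \<alpha> (xpow \<alpha>) = Poly_Mapping.single 0 (pder_factor \<alpha> \<alpha>)"
  by (simp add: pder_xpow pder_mon_def)

lemma pder_xpow_eq_0: "\<not> mdvd \<alpha> \<beta> \<Longrightarrow> pder \<alpha> (xpow \<beta>) = 0"
  by (simp add: pder_xpow pder_mon_def)

lemma pder_factor_self_pos: "0 < pder_factor \<alpha> \<alpha>"
  unfolding pder_factor_def by (intro prod_pos) auto

lemma linear_pder: "linear (pder (\<alpha> :: 'n \<Rightarrow>\<^sub>0 nat))"
proof (rule linearI)
  fix p r :: "'n rpoly"
  let ?S = "Poly_Mapping.keys p \<union> Poly_Mapping.keys r"
  have "pder \<alpha> (p + r) = (\<Sum>\<beta>\<in>?S. pder_mon \<alpha> \<beta> (Poly_Mapping.lookup (p + r) \<beta>))"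
    using keys_add[of p r] by (intro pder_eq_sum) auto
  also have "\<dots> = pder \<alpha> p + pder \<alpha> r"
    by (simp add: pder_eq_sum[of ?S] lookup_add pder_mon_add sum.distrib)
  finally show "pder \<alpha> (p + r) = pder \<alpha> p + pder \<alpha> r" .
next
  fix c and p :: "'n rpoly"
  have "pder \<alpha> (c *\<^sub>R p) = (\<Sum>\<beta>\<in>Poly_Mapping.keys p. pder_mon \<alpha> \<beta> (Poly_Mapping.lookup (c *\<^sub>R p) \<beta>))"
    by (rule pder_eq_sum) (auto simp: in_keys_iff)
  also have "\<dots> = c *\<^sub>R pder \<alpha> p"
    by (simp add: pder_eq_sum[of "Poly_Mapping.keys p"] pder_mon_scale scaleR_sum_right)
  finally show "pder \<alpha> (c *\<^sub>R p) = c *\<^sub>R pder \<alpha> p" .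
qed

lemma deg_le_pder:
  assumes "deg_le d (p::'n::finite rpoly)"
  shows "deg_le (d - mdeg \<alpha>) (pder \<alpha> p)"
  unfolding pder_eq_sum[OF finite_keys subset_refl]
proof (rule deg_le_sum)
  fix \<beta> assume "\<beta> \<in> Poly_Mapping.keys p"
  then have "mdeg \<beta> \<le> d" using assms by (auto simp: deg_le_def)
  then have "mdvd \<alpha> \<beta> \<Longrightarrow> mdeg (\<beta> - \<alpha>) \<le> d - mdeg \<alpha>"
    by (simp add: mdeg_diff)
  then show "deg_le (d - mdeg \<alpha>) (pder_mon \<alpha> \<beta> (Poly_Mapping.lookup p \<beta>))"
    by (auto simp: pder_mon_def intro: deg_le_mono[OF deg_le_single])
qed

lemma pder_eq_0_if_pdeg_less: "pdeg (p::'n::finite rpoly) < mdeg \<alpha> \<Longrightarrow> pder \<alpha> p = 0"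
  unfolding pder_eq_sum[OF finite_keys subset_refl]
  using deg_le_pdeg[of p] mdeg_mono[of \<alpha>] by (intro sum.neutral) (force simp: deg_le_def pder_mon_def)

lemma diffop_eq_sum:
  assumes "deg_le d (p::'n::finite rpoly)"
  shows "diffop q p = (\<Sum>\<alpha>\<in>mdeg_atMost d. q \<alpha> * pder \<alpha> p)"
  unfolding diffop_def using pdeg_le[OF assms] pder_eq_0_if_pdeg_less[of p]
  by (intro sum.mono_neutral_left finite_mdeg_atMost) auto

lemma linear_diffop: "linear (diffop (q :: ('n::finite \<Rightarrow>\<^sub>0 nat) \<Rightarrow> 'n rpoly))"
proof (rule linearI)
  fix p r :: "'n rpoly"
  define d where "d = max (pdeg p) (pdeg r)"
  have p: "deg_le d p" and r: "deg_le d r"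
    using deg_le_pdeg[of p] deg_le_pdeg[of r] by (auto simp: d_def intro: deg_le_mono)
  show "diffop q (p + r) = diffop q p + diffop q r"
    unfolding diffop_eq_sum[OF p] diffop_eq_sum[OF r] diffop_eq_sum[OF deg_le_add[OF p r]]
    by (simp add: linear_add[OF linear_pder] distrib_left sum.distrib)
next
  fix c and p :: "'n rpoly"
  have p: "deg_le (pdeg p) p" by (rule deg_le_pdeg)
  have "q \<alpha> * (c *\<^sub>R pder \<alpha> p) = c *\<^sub>R (q \<alpha> * pder \<alpha> p)" for \<alpha>
    by (simp add: scaleR_eq_const_mult mult.left_commute)
  then show "diffop q (c *\<^sub>R p) = c *\<^sub>R diffop q p"
    unfolding diffop_eq_sum[OF p] diffop_eq_sum[OF deg_le_scaleR[OF p]]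
    by (simp add: linear_scale[OF linear_pder] scaleR_sum_right)
qed

lemma deg_le_diffop:
  assumes "\<And>\<alpha>. deg_le (mdeg \<alpha>) (q \<alpha>)" "deg_le d (p::'n::finite rpoly)"
  shows "deg_le d (diffop q p)"
  unfolding diffop_eq_sum[OF assms(2)]
proof (rule deg_le_sum)
  fix \<alpha> :: "'n \<Rightarrow>\<^sub>0 nat" assume "\<alpha> \<in> mdeg_atMost d"
  moreover have "deg_le (mdeg \<alpha> + (d - mdeg \<alpha>)) (q \<alpha> * pder \<alpha> p)"
    by (intro deg_le_mult assms deg_le_pder)
  ultimately show "deg_le d (q \<alpha> * pder \<alpha> p)" by simp
qed

text \<open>Solving \<open>L x\<^sup>\<alpha> = \<Sum>\<^sub>\<beta> q\<^sub>\<beta> \<partial>\<^sup>\<beta> x\<^sup>\<alpha>\<close> for \<open>q\<^sub>\<alpha>\<close>: of the terms with \<open>|\<beta>| \<ge> |\<alpha>|\<close>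
  only \<open>\<beta> = \<alpha>\<close> survives, and \<open>\<partial>\<^sup>\<alpha> x\<^sup>\<alpha>\<close> is a positive constant.\<close>
function dop_coeff :: "('n::finite rpoly \<Rightarrow> 'n rpoly) \<Rightarrow> ('n \<Rightarrow>\<^sub>0 nat) \<Rightarrow> 'n rpoly" where
  "dop_coeff L \<alpha> = (1 / pder_factor \<alpha> \<alpha>) *\<^sub>R
     (L (xpow \<alpha>) - (\<Sum>\<beta>\<in>{\<beta>. mdeg \<beta> < mdeg \<alpha>}. dop_coeff L \<beta> * pder \<beta> (xpow \<alpha>)))"
  by auto
termination by (relation "Wellfounded.measure (\<lambda>(L, \<alpha>). mdeg \<alpha>)") auto

declare dop_coeff.simps [simp del]

lemma deg_le_dop_coeff:
  assumes "preserves_deg_le L"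
  shows "deg_le (mdeg \<alpha>) (dop_coeff L \<alpha>)"
proof (induction "mdeg \<alpha>" arbitrary: \<alpha> rule: less_induct)
  case less
  have "deg_le (mdeg \<alpha>) (L (xpow \<alpha>))"
    using assms deg_le_single by (auto simp: preserves_deg_le_def)
  moreover have "deg_le (mdeg \<alpha>) (dop_coeff L \<beta> * pder \<beta> (xpow \<alpha>))" if "mdeg \<beta> < mdeg \<alpha>" for \<beta>
    using deg_le_mult[OF less[OF that] deg_le_pder[OF deg_le_single[of \<alpha> 1], of \<beta>]] that by simp
  ultimately show ?case
    by (subst dop_coeff.simps) (intro deg_le_scaleR deg_le_diff deg_le_sum; simp)
qed

lemma diffop_dop_coeff_xpow:
  fixes \<alpha> :: "'n::finite \<Rightarrow>\<^sub>0 nat"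
  shows "diffop (dop_coeff L) (xpow \<alpha>) = L (xpow \<alpha>)"
proof -
  let ?f = "\<lambda>\<beta>. dop_coeff L \<beta> * pder \<beta> (xpow \<alpha>)"
  let ?lower = "{\<beta>::'n \<Rightarrow>\<^sub>0 nat. mdeg \<beta> < mdeg \<alpha>}"
    and ?top = "{\<beta>::'n \<Rightarrow>\<^sub>0 nat. mdeg \<beta> = mdeg \<alpha>}"
  have split: "mdeg_atMost (mdeg \<alpha>) = ?lower \<union> ?top"
    by auto
  have fin_lower: "finite ?lower"
    by (rule finite_subset[OF _ finite_mdeg_atMost[of "mdeg \<alpha>"]]) auto
  have fin_top: "finite ?top"
    by (rule finite_subset[OF _ finite_mdeg_atMost[of "mdeg \<alpha>"]]) auto
  have top: "?f \<beta> = 0" if "\<beta> \<in> ?top - {\<alpha>}" for \<beta>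
  proof -
    from that have "\<not> mdvd \<beta> \<alpha>"
      using mdvd_mdeg_eq_imp_eq[of \<beta> \<alpha>] by auto
    then show ?thesis by (simp add: pder_xpow_eq_0)
  qed
  have "diffop (dop_coeff L) (xpow \<alpha>) = sum ?f (?lower \<union> ?top)"
    unfolding split[symmetric] by (rule diffop_eq_sum[OF deg_le_single])
  also have "\<dots> = sum ?f ?lower + sum ?f ?top"
    using fin_lower fin_top by (rule sum.union_disjoint) auto
  also have "sum ?f ?top = ?f \<alpha> + sum ?f (?top - {\<alpha>})"
    using fin_top by (rule sum.remove) simp
  also have "sum ?f (?top - {\<alpha>}) = 0"
    using top by (intro sum.neutral) blast
  also have "?f \<alpha> = pder_factor \<alpha> \<alpha> *\<^sub>R dop_coeff L \<alpha>"
    by (simp add: pder_xpow_self scaleR_eq_const_mult mult.commute)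
  also have "\<dots> = L (xpow \<alpha>) - sum ?f ?lower"
    using pder_factor_self_pos[of \<alpha>] by (subst dop_coeff.simps) simp
  finally show ?thesis by simp
qed

lemma dops_iff: "A \<in> dops \<longleftrightarrow> linear A \<and> preserves_deg_le A"
proof
  assume "A \<in> dops"
  then show "linear A \<and> preserves_deg_le A"
    by (auto simp: dops_def preserves_deg_le_def linear_diffop deg_le_diffop)
next
  assume A: "linear A \<and> preserves_deg_le A"
  then have "A = diffop (dop_coeff A)"
    by (intro linear_eqI_xpow linear_diffop) (simp_all add: diffop_dop_coeff_xpow)
  with A show "A \<in> dops"
    unfolding dops_def by (blast intro: deg_le_dop_coeff)
qed

section \<open>The exponential series\<close>

text \<open>The norm of a polynomial is the sum of the absolute values of its coefficients.\<close>

lemma norm_lookup_le: "norm (Poly_Mapping.lookup p k) \<le> norm (p :: 'a \<Rightarrow>\<^sub>0 'b::real_normed_vector)"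
proof -
  have "norm p = (\<Sum>n\<in>Poly_Mapping.keys p. norm (Poly_Mapping.lookup p n))"
    by (simp add: norm_poly_mapping_def dist_poly_mapping_def dist_norm)
  then show ?thesis
    by (cases "k \<in> Poly_Mapping.keys p") (auto simp: in_keys_iff sum_nonneg intro: member_le_sum)
qed

lemma linear_bounded_on_deg_le:
  fixes L :: "'n::finite rpoly \<Rightarrow> 'n rpoly"
  assumes "linear L"
  obtains K where "K \<ge> 0" "\<And>p. deg_le d p \<Longrightarrow> norm (L p) \<le> K * norm p"
proof
  let ?K = "\<Sum>\<gamma>\<in>mdeg_atMost d. norm (L (xpow \<gamma>))"
  show "?K \<ge> 0" by (simp add: sum_nonneg)
  fix p :: "'n rpoly" assume p: "deg_le d p"
  have "norm (L p) = norm (\<Sum>\<gamma>\<in>mdeg_atMost d. Poly_Mapping.lookup p \<gamma> *\<^sub>R L (xpow \<gamma>))"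
    using p by (simp add: linear_eq_sum_xpow[OF assms finite_mdeg_atMost] deg_le_iff_keys)
  also have "\<dots> \<le> (\<Sum>\<gamma>\<in>mdeg_atMost d. norm (Poly_Mapping.lookup p \<gamma>) * norm (L (xpow \<gamma>)))"
    by (rule order_trans[OF norm_sum]) simp
  also have "\<dots> \<le> (\<Sum>\<gamma>\<in>mdeg_atMost d. norm p * norm (L (xpow \<gamma>)))"
    by (intro sum_mono mult_right_mono norm_lookup_le norm_ge_zero)
  also have "\<dots> = ?K * norm p"
    by (simp add: sum_distrib_left mult.commute)
  finally show "norm (L p) \<le> ?K * norm p" .
qed

lemma norm_funpow_le:
  assumes "preserves_deg_le A" "K \<ge> 0" "\<And>q. deg_le d q \<Longrightarrow> norm (A q) \<le> K * norm q"
    and "deg_le d p"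
  shows "norm ((A ^^ k) p) \<le> K ^ k * norm p"
proof (induction k)
  case (Suc k)
  have "norm ((A ^^ Suc k) p) \<le> K * norm ((A ^^ k) p)"
    using assms(3)[OF deg_le_funpow[OF assms(1,4)]] by simp
  also have "\<dots> \<le> K * (K ^ k * norm p)"
    by (rule mult_left_mono[OF Suc assms(2)])
  finally show ?case by simp
qed simp

lemma lookup_funpow_bound:
  fixes A :: "'n::finite rpoly \<Rightarrow> 'n rpoly"
  assumes "linear A" "preserves_deg_le A"
  obtains K where "K \<ge> 0" "\<And>k \<beta>. \<bar>Poly_Mapping.lookup ((A ^^ k) p) \<beta>\<bar> \<le> K ^ k * norm p"
proof -
  obtain K where K: "K \<ge> 0" "\<And>q. deg_le (pdeg p) q \<Longrightarrow> norm (A q) \<le> K * norm q"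
    using linear_bounded_on_deg_le[OF assms(1)] by blast
  have "\<bar>Poly_Mapping.lookup ((A ^^ k) p) \<beta>\<bar> \<le> K ^ k * norm p" for k \<beta>
    using norm_lookup_le[of "(A ^^ k) p" \<beta>] norm_funpow_le[OF assms(2) K deg_le_pdeg[of p], of k]
    by simp
  with K(1) show ?thesis by (rule that)
qed

lemma summable_abs_exp_coeff:
  fixes A :: "'n::finite rpoly \<Rightarrow> 'n rpoly"
  assumes "linear A" "preserves_deg_le A"
  shows "summable (\<lambda>k. \<bar>t ^ k / fact k * Poly_Mapping.lookup ((A ^^ k) p) \<beta>\<bar>)"
proof -
  obtain K where K: "K \<ge> 0" "\<And>k \<beta>. \<bar>Poly_Mapping.lookup ((A ^^ k) p) \<beta>\<bar> \<le> K ^ k * norm p"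
    using lookup_funpow_bound[OF assms] by blast
  have "summable (\<lambda>k. inverse (fact k) * (\<bar>t\<bar> * K) ^ k * norm p)"
    by (intro summable_mult2 summable_exp)
  then show ?thesis
  proof (rule summable_comparison_test')
    fix k :: nat
    have "\<bar>t ^ k / fact k * Poly_Mapping.lookup ((A ^^ k) p) \<beta>\<bar>
        = \<bar>t\<bar> ^ k / fact k * \<bar>Poly_Mapping.lookup ((A ^^ k) p) \<beta>\<bar>"
      by (simp add: abs_mult power_abs)
    also have "\<dots> \<le> \<bar>t\<bar> ^ k / fact k * (K ^ k * norm p)"
      by (intro mult_left_mono K(2)) auto
    also have "\<dots> = inverse (fact k) * (\<bar>t\<bar> * K) ^ k * norm p"
      by (simp add: power_mult_distrib divide_inverse mult_ac)
    finally show "norm \<bar>t ^ k / fact k * Poly_Mapping.lookup ((A ^^ k) p) \<beta>\<bar>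
        \<le> inverse (fact k) * (\<bar>t\<bar> * K) ^ k * norm p"
      by simp
  qed
qed

lemma summable_exp_coeff:
  fixes A :: "'n::finite rpoly \<Rightarrow> 'n rpoly"
  assumes "linear A" "preserves_deg_le A"
  shows "summable (\<lambda>k. t ^ k / fact k * Poly_Mapping.lookup ((A ^^ k) p) \<beta>)"
  by (rule summable_rabs_cancel[OF summable_abs_exp_coeff[OF assms]])

lemma lookup_expop:
  fixes A :: "'n::finite rpoly \<Rightarrow> 'n rpoly"
  assumes "preserves_deg_le A"
  shows "Poly_Mapping.lookup (expop t A p) \<beta>
    = suminf (\<lambda>k. t ^ k / fact k * Poly_Mapping.lookup ((A ^^ k) p) \<beta>)"
proof -
  let ?c = "\<lambda>\<beta>. suminf (\<lambda>k. t ^ k / fact k * Poly_Mapping.lookup ((A ^^ k) p) \<beta>)"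
  have "?c \<beta> = 0" if "\<not> mdeg \<beta> \<le> pdeg p" for \<beta>
    using lookup_eq_0_if_not_deg_le[OF deg_le_funpow[OF assms deg_le_pdeg] that] by simp
  then have "finite {\<beta>. ?c \<beta> \<noteq> 0}"
    by (intro finite_subset[OF _ finite_mdeg_atMost[of "pdeg p"]]) auto
  then show ?thesis
    by (simp add: expop_def)
qed

lemma linear_expop:
  fixes A :: "'n::finite rpoly \<Rightarrow> 'n rpoly"
  assumes "linear A" "preserves_deg_le A"
  shows "linear (expop t A)"
proof (rule linearI)
  fix p r :: "'n rpoly"
  show "expop t A (p + r) = expop t A p + expop t A r"
  proof (rule poly_mapping_eqI)
    fix \<beta>
    show "Poly_Mapping.lookup (expop t A (p + r)) \<beta> = Poly_Mapping.lookup (expop t A p + expop t A r) \<beta>"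
      using suminf_add[OF summable_exp_coeff[OF assms, of t p \<beta>] summable_exp_coeff[OF assms, of t r \<beta>]]
      by (simp add: lookup_expop[OF assms(2)] lookup_add linear_add[OF linear_funpow[OF assms(1)]]
          distrib_left)
  qed
next
  fix c and p :: "'n rpoly"
  show "expop t A (c *\<^sub>R p) = c *\<^sub>R expop t A p"
  proof (rule poly_mapping_eqI)
    fix \<beta>
    show "Poly_Mapping.lookup (expop t A (c *\<^sub>R p)) \<beta> = Poly_Mapping.lookup (c *\<^sub>R expop t A p) \<beta>"
      using suminf_mult[OF summable_exp_coeff[OF assms, of t p \<beta>], of c]
      by (simp add: lookup_expop[OF assms(2)] linear_scale[OF linear_funpow[OF assms(1)]] mult_ac)
  qed
qed

lemma preserves_deg_le_expop:
  fixes A :: "'n::finite rpoly \<Rightarrow> 'n rpoly"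
  assumes "preserves_deg_le A"
  shows "preserves_deg_le (expop t A)"
  unfolding preserves_deg_le_def deg_le_def
proof (intro allI impI ballI)
  fix d p \<beta> assume p: "\<forall>\<alpha>\<in>Poly_Mapping.keys p. mdeg \<alpha> \<le> d"
    and \<beta>: "\<beta> \<in> Poly_Mapping.keys (expop t A p)"
  show "mdeg \<beta> \<le> d"
  proof (rule ccontr)
    assume "\<not> mdeg \<beta> \<le> d"
    with p have "Poly_Mapping.lookup ((A ^^ k) p) \<beta> = 0" for k
      by (intro lookup_eq_0_if_not_deg_le[OF deg_le_funpow[OF assms]]) (auto simp: deg_le_def)
    then have "Poly_Mapping.lookup (expop t A p) \<beta> = 0"
      by (simp add: lookup_expop[OF assms])
    with \<beta> show False by (simp add: in_keys_iff)
  qed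
qed

lemma expop_in_dops: "A \<in> dops \<Longrightarrow> expop t A \<in> dops"
  by (simp add: dops_iff linear_expop preserves_deg_le_expop)

lemma lookup_funpow_add:
  fixes A :: "'n::finite rpoly \<Rightarrow> 'n rpoly"
  assumes "linear A" "preserves_deg_le A" "deg_le d p"
  shows "Poly_Mapping.lookup ((A ^^ (i + k)) p) \<beta>
    = (\<Sum>\<gamma>\<in>mdeg_atMost d. Poly_Mapping.lookup ((A ^^ k) p) \<gamma> * Poly_Mapping.lookup ((A ^^ i) (xpow \<gamma>)) \<beta>)"
  using lookup_linear[OF linear_funpow[OF assms(1)] deg_le_funpow[OF assms(2,3)], of i]
  by (simp add: funpow_add)

lemma exp_coeff_Cauchy_product_term:
  fixes A :: "'n::finite rpoly \<Rightarrow> 'n rpoly"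
  assumes "linear A" "preserves_deg_le A"
  shows "(\<Sum>\<gamma>\<in>mdeg_atMost (pdeg p). \<Sum>i\<le>n.
      s ^ i / fact i * Poly_Mapping.lookup ((A ^^ i) (xpow \<gamma>)) \<beta>
      * (t ^ (n - i) / fact (n - i) * Poly_Mapping.lookup ((A ^^ (n - i)) p) \<gamma>))
    = (s + t) ^ n / fact n * Poly_Mapping.lookup ((A ^^ n) p) \<beta>"
proof -
  let ?G = "mdeg_atMost (pdeg p) :: ('n \<Rightarrow>\<^sub>0 nat) set"
  have "(\<Sum>\<gamma>\<in>?G. \<Sum>i\<le>n. s ^ i / fact i * Poly_Mapping.lookup ((A ^^ i) (xpow \<gamma>)) \<beta>
      * (t ^ (n - i) / fact (n - i) * Poly_Mapping.lookup ((A ^^ (n - i)) p) \<gamma>))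
    = (\<Sum>i\<le>n. s ^ i / fact i * (t ^ (n - i) / fact (n - i)) * (\<Sum>\<gamma>\<in>?G.
        Poly_Mapping.lookup ((A ^^ (n - i)) p) \<gamma> * Poly_Mapping.lookup ((A ^^ i) (xpow \<gamma>)) \<beta>))"
    by (subst sum.swap) (simp add: sum_distrib_left mult_ac)
  also have "\<dots> = (\<Sum>i\<le>n. s ^ i / fact i * (t ^ (n - i) / fact (n - i)))
      * Poly_Mapping.lookup ((A ^^ n) p) \<beta>"
    by (auto simp: sum_distrib_right lookup_funpow_add[OF assms deg_le_pdeg, symmetric]
        intro!: sum.cong)
  also have "\<dots> = (s + t) ^ n / fact n * Poly_Mapping.lookup ((A ^^ n) p) \<beta>"
    using exp_series_add_commuting[of s t n] by (simp add: divide_inverse mult_ac)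
  finally show ?thesis .
qed

lemma expop_add:
  fixes A :: "'n::finite rpoly \<Rightarrow> 'n rpoly"
  assumes A: "linear A" "preserves_deg_le A"
  shows "expop s A (expop t A p) = expop (s + t) A p"
proof (rule poly_mapping_eqI)
  fix \<beta>
  let ?G = "mdeg_atMost (pdeg p) :: ('n \<Rightarrow>\<^sub>0 nat) set"
  define u where "u \<gamma> j = s ^ j / fact j * Poly_Mapping.lookup ((A ^^ j) (xpow \<gamma>)) \<beta>" for \<gamma> j
  define v where "v \<gamma> k = t ^ k / fact k * Poly_Mapping.lookup ((A ^^ k) p) \<gamma>" for \<gamma> k
  have u: "summable (u \<gamma>)" "summable (\<lambda>j. norm (u \<gamma> j))" for \<gamma>
    unfolding u_def real_norm_def
    by (rule summable_exp_coeff[OF A], rule summable_abs_exp_coeff[OF A])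
  have v: "summable (\<lambda>k. norm (v \<gamma> k))" for \<gamma>
    unfolding v_def real_norm_def by (rule summable_abs_exp_coeff[OF A])
  have lookup_E: "Poly_Mapping.lookup (expop t A p) \<gamma> = suminf (v \<gamma>)" for \<gamma>
    unfolding v_def by (rule lookup_expop[OF A(2)])
  have deg_E: "deg_le (pdeg p) (expop t A p)"
    using preserves_deg_le_expop[OF A(2)] deg_le_pdeg by (auto simp: preserves_deg_le_def)
  have "Poly_Mapping.lookup (expop s A (expop t A p)) \<beta>
      = suminf (\<lambda>j. s ^ j / fact j * Poly_Mapping.lookup ((A ^^ j) (expop t A p)) \<beta>)"
    by (rule lookup_expop[OF A(2)])
  also have "\<dots> = suminf (\<lambda>j. \<Sum>\<gamma>\<in>?G. suminf (v \<gamma>) * u \<gamma> j)"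
    unfolding lookup_linear[OF linear_funpow[OF A(1)] deg_E] lookup_E
    by (simp add: u_def sum_distrib_left mult_ac)
  also have "\<dots> = (\<Sum>\<gamma>\<in>?G. suminf (u \<gamma>) * suminf (v \<gamma>))"
    using u(1) by (simp add: suminf_sum summable_mult suminf_mult mult.commute)
  also have "\<dots> = (\<Sum>\<gamma>\<in>?G. suminf (\<lambda>n. \<Sum>i\<le>n. u \<gamma> i * v \<gamma> (n - i)))"
    by (simp add: Cauchy_product[OF u(2) v])
  also have "\<dots> = suminf (\<lambda>n. \<Sum>\<gamma>\<in>?G. \<Sum>i\<le>n. u \<gamma> i * v \<gamma> (n - i))"
    by (rule suminf_sum[symmetric]) (rule summable_Cauchy_product[OF u(2) v])
  also have "\<dots> = Poly_Mapping.lookup (expop (s + t) A p) \<beta>"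
    unfolding u_def v_def exp_coeff_Cauchy_product_term[OF A] by (rule lookup_expop[OF A(2), symmetric])
  finally show "Poly_Mapping.lookup (expop s A (expop t A p)) \<beta>
      = Poly_Mapping.lookup (expop (s + t) A p) \<beta>" .
qed

lemma expop_0:
  fixes A :: "'n::finite rpoly \<Rightarrow> 'n rpoly"
  assumes "preserves_deg_le A"
  shows "expop 0 A p = p"
proof (rule poly_mapping_eqI)
  fix \<beta>
  have "(\<lambda>k. 0 ^ k / fact k * Poly_Mapping.lookup ((A ^^ k) p) \<beta>)
      = (\<lambda>k. if k = 0 then Poly_Mapping.lookup p \<beta> else 0)"
    by (auto simp: fun_eq_iff)
  then show "Poly_Mapping.lookup (expop 0 A p) \<beta> = Poly_Mapping.lookup p \<beta>"
    using sums_single[of 0 "\<lambda>_. Poly_Mapping.lookup p \<beta>"]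
    by (simp add: lookup_expop[OF assms] sums_iff)
qed

lemma expop_injective:
  fixes A :: "'n::finite rpoly \<Rightarrow> 'n rpoly"
  assumes "linear A" "preserves_deg_le A" "expop t A p = 0"
  shows "p = 0"
proof -
  have "p = expop (- t) A (expop t A p)"
    by (simp add: expop_add[OF assms(1,2)] expop_0[OF assms(2)])
  also have "\<dots> = 0"
    by (simp add: assms(3) linear_0[OF linear_expop[OF assms(1,2)]])
  finally show ?thesis .
qed

section \<open>Invariant closed cones\<close>

lemma convex_cone_rp_sum_mem:
  assumes "convex_cone_rp C" "\<And>k. k \<in> S \<Longrightarrow> c k \<ge> 0" "\<And>k. k \<in> S \<Longrightarrow> x k \<in> C"
  shows "(\<Sum>k\<in>S. c k *\<^sub>R x k) \<in> C"
  using assms(2,3)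
proof (induction S rule: infinite_finite_induct)
  case (insert k S)
  then show ?case
    using assms(1) by (simp add: convex_cone_rp_def smult_rp_eq_scaleR)
qed (use assms(1) in \<open>simp_all add: convex_cone_rp_def\<close>)

lemma tendsto_lookup_pointwise:
  assumes "\<And>\<beta>. ((\<lambda>n. Poly_Mapping.lookup (P n) \<beta>) \<longlongrightarrow> Poly_Mapping.lookup E \<beta>) F"
  shows "((\<lambda>n. Poly_Mapping.lookup (P n)) \<longlongrightarrow> Poly_Mapping.lookup (E :: 'a \<Rightarrow>\<^sub>0 real)) F"
proof -
  have "limitin (product_topology (\<lambda>_. euclidean) UNIV) (\<lambda>n. Poly_Mapping.lookup (P n))
      (Poly_Mapping.lookup E) F"
    unfolding limitin_componentwise using assms by simp
  then show ?thesis
    unfolding euclidean_product_topology limitin_canonical_iff .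
qed

lemma expop_mem_closed_cone:
  fixes T :: "'n::finite rpoly \<Rightarrow> 'n rpoly"
  assumes C: "convex_cone_rp C" "LF_closed C"
    and T: "linear T" "preserves_deg_le T" "\<And>p. p \<in> C \<Longrightarrow> T p \<in> C"
    and "t \<ge> 0" "p \<in> C"
  shows "expop t T p \<in> C"
proof -
  let ?S = "{q \<in> C. deg_le (pdeg p) q}"
  define P where "P N = (\<Sum>k<N. (t ^ k / fact k) *\<^sub>R (T ^^ k) p)" for N
  have T_pow: "(T ^^ k) p \<in> C" for k
    by (induction k) (simp_all add: \<open>p \<in> C\<close> T(3))
  have "P N \<in> ?S" for N
    unfolding P_def using \<open>t \<ge> 0\<close>
    by (auto intro!: convex_cone_rp_sum_mem[OF C(1)] T_pow deg_le_sum deg_le_scaleR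
        deg_le_funpow[OF T(2) deg_le_pdeg])
  moreover have "((\<lambda>N. Poly_Mapping.lookup (P N)) \<longlongrightarrow> Poly_Mapping.lookup (expop t T p)) sequentially"
  proof (rule tendsto_lookup_pointwise)
    fix \<beta>
    show "(\<lambda>N. Poly_Mapping.lookup (P N) \<beta>) \<longlonglongrightarrow> Poly_Mapping.lookup (expop t T p) \<beta>"
      using summable_LIMSEQ[OF summable_exp_coeff[OF T(1,2), of t p \<beta>]]
      by (simp add: P_def lookup_sum lookup_expop[OF T(2)])
  qed
  moreover have "closed (Poly_Mapping.lookup ` ?S)"
    using C(2) by (simp add: LF_closed_def)
  ultimately have "Poly_Mapping.lookup (expop t T p) \<in> Poly_Mapping.lookup ` ?S"
    by (intro Lim_in_closed_set[where f = "\<lambda>N. Poly_Mapping.lookup (P N)"]) auto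
  then show ?thesis
    by (auto simp: poly_mapping.lookup_inject)
qed

theorem corollary5p6:
  fixes C :: "'n::finite rpoly set"
  assumes "convex_cone_rp C" and "LF_closed C"
  shows "Dops_C C \<subseteq> dops_C C"
proof
  fix T assume "T \<in> Dops_C C"
  then have T: "T \<in> dops" "\<And>p. p \<in> C \<Longrightarrow> T p \<in> C"
    by (auto simp: Dops_C_def Dops_def)
  then have T_lin: "linear T" "preserves_deg_le T"
    by (simp_all add: dops_iff)
  have "expop t T \<in> Dops_C C" if "t \<ge> 0" for t
    using expop_in_dops[OF T(1)] expop_injective[OF T_lin]
      expop_mem_closed_cone[OF assms T_lin T(2) that]
    by (auto simp: Dops_C_def Dops_def)
  with T(1) show "T \<in> dops_C C"
    by (simp add: dops_C_def)
qed

end
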